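(* For any family of policies $\Pi$, $\mathrm{PF}(\Pi)\subseteq \mathrm{DUS}(\Pi)$.
   Context: $\Pi$ is a family of policies of a multi-objective sequential decision problem with $d$ objectives; each $\pi\in\Pi$ has a random return vector $\mathbf{Z}^\pi\in\mathbb{R}^d$ (discounted sum of vector rewards) with finite expectation $\mathbf{V}^\pi=\mathbb{E}[\mathbf{Z}^\pi]$. For $\mathbf{x},\mathbf{y}\in\mathbb{R}^d$: $\mathbf{y}\preceq_p\mathbf{x}$ iff $y_i\le x_i$ for all $i$; $\mathbf{x}\succ_p\mathbf{y}$ iff $x_i\ge y_i$ for all $i$ and $x_i>y_i$ for some $i$. CDF: $F_{\mathbf{X}}(\mathbf{x})=P(\mathbf{X}\preceq_p\mathbf{x})$. $\mathbf{X}\succeq_{\mathrm{FSD}}\mathbf{Y}$ iff $F_{\mathbf{X}}\le F_{\mathbf{Y}}$ pointwise; $\mathbf{X}\succ_{\mathrm{FSD}}\mathbf{Y}$ iff additionally strict inequality at some point (same for real random variables). $\mathbf{X}\succ_d\mathbf{Y}$ (distributional dominance) iff $\mathbf{X}\succeq_{\mathrm{FSD}}\mathbf{Y}$ and $X_i\succ_{\mathrm{FSD}}Y_i$ for some marginal $i$. Pareto front: $\mathrm{PF}(\Pi)=\{\pi\in\Pi:\nexists\pi'\in\Pi,\ \mathbf{V}^{\pi'}\succ_p\mathbf{V}^\pi\}$. Distributional undominated set: $\mathrm{DUS}(\Pi)=\{\pi\in\Pi:\nexists\pi'\in\Pi,\ \mathbf{Z}^{\pi'}\succ_d\mathbf{Z}^\pi\}$.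 *)

theory Defs
  imports "HOL-Probability.Probability"
begin

definition pareto_le :: "real^'d \<Rightarrow> real^'d \<Rightarrow> bool" where
  "pareto_le y x \<longleftrightarrow> (\<forall>i. y $ i \<le> x $ i)"

definition pareto_dom :: "real^'d \<Rightarrow> real^'d \<Rightarrow> bool" where
  "pareto_dom x y \<longleftrightarrow> (\<forall>i. x $ i \<ge> y $ i) \<and> (\<exists>i. x $ i > y $ i)"

definition cdf_vec :: "'w measure \<Rightarrow> ('w \<Rightarrow> real^'d) \<Rightarrow> real^'d \<Rightarrow> real" where
  "cdf_vec M X x = measure M {w \<in> space M. pareto_le (X w) x}"

definition cdf_real :: "'w measure \<Rightarrow> ('w \<Rightarrow> real) \<Rightarrow> real \<Rightarrow> real" where
  "cdf_real M f t = measure M {w \<in> space M. f w \<le> t}"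

definition fsd_ge_vec :: "'w measure \<Rightarrow> ('w \<Rightarrow> real^'d) \<Rightarrow> 'w measure \<Rightarrow> ('w \<Rightarrow> real^'d) \<Rightarrow> bool" where
  "fsd_ge_vec M X N Y \<longleftrightarrow> (\<forall>x. cdf_vec M X x \<le> cdf_vec N Y x)"

definition fsd_strict_real :: "'w measure \<Rightarrow> ('w \<Rightarrow> real) \<Rightarrow> 'w measure \<Rightarrow> ('w \<Rightarrow> real) \<Rightarrow> bool" where
  "fsd_strict_real M f N g \<longleftrightarrow>
     (\<forall>t. cdf_real M f t \<le> cdf_real N g t) \<and> (\<exists>t. cdf_real M f t < cdf_real N g t)"

definition dist_dom :: "'w measure \<Rightarrow> ('w \<Rightarrow> real^'d) \<Rightarrow> 'w measure \<Rightarrow> ('w \<Rightarrow> real^'d) \<Rightarrow> bool" where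
  "dist_dom M X N Y \<longleftrightarrow> fsd_ge_vec M X N Y \<and>
     (\<exists>i. fsd_strict_real M (\<lambda>w. X w $ i) N (\<lambda>w. Y w $ i))"

definition value_vec :: "('p \<Rightarrow> 'w measure) \<Rightarrow> ('p \<Rightarrow> 'w \<Rightarrow> real^'d) \<Rightarrow> 'p \<Rightarrow> real^'d" where
  "value_vec M Z \<pi> = integral\<^sup>L (M \<pi>) (Z \<pi>)"

definition pareto_front :: "'p set \<Rightarrow> ('p \<Rightarrow> 'w measure) \<Rightarrow> ('p \<Rightarrow> 'w \<Rightarrow> real^'d) \<Rightarrow> 'p set" where
  "pareto_front Pols M Z = {\<pi> \<in> Pols. \<not> (\<exists>\<pi>'\<in>Pols. pareto_dom (value_vec M Z \<pi>') (value_vec M Z \<pi>))}"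

definition dus :: "'p set \<Rightarrow> ('p \<Rightarrow> 'w measure) \<Rightarrow> ('p \<Rightarrow> 'w \<Rightarrow> real^'d) \<Rightarrow> 'p set" where
  "dus Pols M Z = {\<pi> \<in> Pols. \<not> (\<exists>\<pi>'\<in>Pols. dist_dom (M \<pi>') (Z \<pi>') (M \<pi>) (Z \<pi>))}"

end

theory Submission
  imports Defs
begin

(*
  Vector first-order dominance implies first-order dominance of every marginal: let all
  coordinates but the j-th tend to infinity in the joint CDF. For real random variables,
  the layer-cake formula
    E f = \<integral>\<^sub>0\<^sup>\<infinity> (1 - F(t)) dt - \<integral>\<^sub>0\<^sup>\<infinity> F(-t) dt
  turns F \<le> G into E g \<le> E f; if moreover F(t\<^sub>0) < G(t\<^sub>0), right-continuity of F keeps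
  a gap on an interval to the right of t\<^sub>0, which makes the inequality strict. Hence the
  expected return of a distributionally dominating policy Pareto-dominates, so a policy on
  the Pareto front cannot be distributionally dominated.
*)

lemma pareto_le_iff_less_eq: "pareto_le y x \<longleftrightarrow> y \<le> x"
  by (simp add: pareto_le_def less_eq_vec_def)

lemma (in prob_space) cdf_distr_eq_cdf_real:
  assumes "f \<in> borel_measurable M"
  shows "cdf (distr M borel f) = cdf_real M f"
  using assms by (auto simp: fun_eq_iff cdf_def cdf_real_def measure_distr vimage_def Int_def conj_commute)

lemma (in prob_space) mono_cdf_real:
  assumes "f \<in> borel_measurable M"
  shows "mono (cdf_real M f)"
proof -
  interpret D: real_distribution "distr M borel f"
    using assms by simp
  show ?thesis
    using D.cdf_nondecreasing by (simp add: mono_def cdf_distr_eq_cdf_real[OF assms])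
qed

lemma (in prob_space) cdf_real_right_continuous:
  assumes "f \<in> borel_measurable M"
  shows "continuous (at_right a) (cdf_real M f)"
proof -
  interpret D: real_distribution "distr M borel f"
    using assms by simp
  show ?thesis
    using D.cdf_is_right_cont by (simp add: cdf_distr_eq_cdf_real[OF assms])
qed

lemma (in pair_sigma_finite) nn_integral_emeasure_sections:
  assumes "Sigma (space M1) S \<in> sets (M1 \<Otimes>\<^sub>M M2)"
  shows "(\<integral>\<^sup>+x. emeasure M2 (S x) \<partial>M1) = (\<integral>\<^sup>+y. emeasure M1 {x\<in>space M1. y \<in> S x} \<partial>M2)"
proof -
  have "(\<integral>\<^sup>+x. emeasure M2 (S x) \<partial>M1) = (\<integral>\<^sup>+x. emeasure M2 (Pair x -` Sigma (space M1) S) \<partial>M1)"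
    by (intro nn_integral_cong arg_cong[where f = "emeasure M2"]) auto
  also have "\<dots> = emeasure (M1 \<Otimes>\<^sub>M M2) (Sigma (space M1) S)"
    by (rule M2.emeasure_pair_measure_alt[OF assms, symmetric])
  also have "\<dots> = (\<integral>\<^sup>+y. emeasure M1 ((\<lambda>x. (x, y)) -` Sigma (space M1) S) \<partial>M2)"
    by (rule emeasure_pair_measure_alt2[OF assms])
  also have "\<dots> = (\<integral>\<^sup>+y. emeasure M1 {x\<in>space M1. y \<in> S x} \<partial>M2)"
    by (intro nn_integral_cong arg_cong[where f = "emeasure M1"]) auto
  finally show ?thesis .
qed

lemma emeasure_lborel_Ico_0: "emeasure lborel {0..<a :: real} = ennreal a"
  by (cases "0 \<le> a") (simp_all add: ennreal_neg)

lemma emeasure_lborel_Ioc_0: "emeasure lborel {0<..a :: real} = ennreal a"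
  by (cases "0 \<le> a") (simp_all add: ennreal_neg)

lemma (in prob_space) nn_integral_pos_part_eq_cdf:
  assumes [measurable]: "f \<in> borel_measurable M"
  shows "(\<integral>\<^sup>+x. ennreal (f x) \<partial>M) = (\<integral>\<^sup>+t\<in>{0..}. ennreal (1 - cdf_real M f t) \<partial>lborel)"
proof -
  interpret pair_sigma_finite M lborel ..
  have "Sigma (space M) (\<lambda>x. {0..<f x}) = {p \<in> space (M \<Otimes>\<^sub>M lborel). 0 \<le> snd p \<and> snd p < f (fst p)}"
    by (auto simp: space_pair_measure)
  also have "\<dots> \<in> sets (M \<Otimes>\<^sub>M lborel)"
    by measurable
  finally have sets: "Sigma (space M) (\<lambda>x. {0..<f x}) \<in> sets (M \<Otimes>\<^sub>M lborel)" .
  have tail: "emeasure M {x\<in>space M. t \<in> {0..<f x}} = ennreal (1 - cdf_real M f t) * indicator {0..} t"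
    for t
  proof (cases "0 \<le> t")
    case True
    then have "{x\<in>space M. t \<in> {0..<f x}} = space M - {x\<in>space M. f x \<le> t}"
      by auto
    then show ?thesis
      using True by (simp add: emeasure_eq_measure prob_compl cdf_real_def)
  qed simp
  have "(\<integral>\<^sup>+x. ennreal (f x) \<partial>M) = (\<integral>\<^sup>+x. emeasure lborel {0..<f x} \<partial>M)"
    by (simp add: emeasure_lborel_Ico_0)
  also have "\<dots> = (\<integral>\<^sup>+t. emeasure M {x\<in>space M. t \<in> {0..<f x}} \<partial>lborel)"
    by (rule nn_integral_emeasure_sections[OF sets])
  finally show ?thesis
    by (simp only: tail)
qed

lemma (in prob_space) nn_integral_neg_part_eq_cdf:
  assumes [measurable]: "f \<in> borel_measurable M"
  shows "(\<integral>\<^sup>+x. ennreal (- f x) \<partial>M) = (\<integral>\<^sup>+t\<in>{0<..}. ennreal (cdf_real M f (- t)) \<partial>lborel)"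
proof -
  interpret pair_sigma_finite M lborel ..
  have "Sigma (space M) (\<lambda>x. {0<..- f x}) = {p \<in> space (M \<Otimes>\<^sub>M lborel). 0 < snd p \<and> snd p \<le> - f (fst p)}"
    by (auto simp: space_pair_measure)
  also have "\<dots> \<in> sets (M \<Otimes>\<^sub>M lborel)"
    by measurable
  finally have sets: "Sigma (space M) (\<lambda>x. {0<..- f x}) \<in> sets (M \<Otimes>\<^sub>M lborel)" .
  have tail: "emeasure M {x\<in>space M. t \<in> {0<..- f x}} = ennreal (cdf_real M f (- t)) * indicator {0<..} t"
    for t
  proof (cases "0 < t")
    case True
    then have "{x\<in>space M. t \<in> {0<..- f x}} = {x\<in>space M. f x \<le> - t}"
      by auto
    then show ?thesis
      using True by (simp add: emeasure_eq_measure cdf_real_def)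
  qed simp
  have "(\<integral>\<^sup>+x. ennreal (- f x) \<partial>M) = (\<integral>\<^sup>+x. emeasure lborel {0<..- f x} \<partial>M)"
    by (simp add: emeasure_lborel_Ioc_0)
  also have "\<dots> = (\<integral>\<^sup>+t. emeasure M {x\<in>space M. t \<in> {0<..- f x}} \<partial>lborel)"
    by (rule nn_integral_emeasure_sections[OF sets])
  finally show ?thesis
    by (simp only: tail)
qed

lemma nn_integral_pos_part_le_of_cdf_le:
  assumes "prob_space M" "prob_space N" "f \<in> borel_measurable M" "g \<in> borel_measurable N"
    and "\<And>t. cdf_real M f t \<le> cdf_real N g t"
  shows "(\<integral>\<^sup>+x. ennreal (g x) \<partial>N) \<le> (\<integral>\<^sup>+x. ennreal (f x) \<partial>M)"
  using assms
  by (simp add: prob_space.nn_integral_pos_part_eq_cdf)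
     (intro nn_integral_mono mult_right_mono ennreal_leI; simp)

lemma nn_integral_neg_part_le_of_cdf_le:
  assumes "prob_space M" "prob_space N" "f \<in> borel_measurable M" "g \<in> borel_measurable N"
    and "\<And>t. cdf_real M f t \<le> cdf_real N g t"
  shows "(\<integral>\<^sup>+x. ennreal (- f x) \<partial>M) \<le> (\<integral>\<^sup>+x. ennreal (- g x) \<partial>N)"
  using assms
  by (simp add: prob_space.nn_integral_neg_part_eq_cdf)
     (intro nn_integral_mono mult_right_mono ennreal_leI; simp)

lemma nn_integral_lborel_less_of_less_on_interval:
  fixes u v :: "real \<Rightarrow> ennreal"
  assumes [measurable]: "u \<in> borel_measurable borel" "v \<in> borel_measurable borel"
    and "(\<integral>\<^sup>+t. u t \<partial>lborel) \<noteq> \<infinity>"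
    and le: "\<And>t. u t \<le> v t"
    and "a < b" and less: "\<And>t. a < t \<Longrightarrow> t < b \<Longrightarrow> u t < v t"
  shows "(\<integral>\<^sup>+t. u t \<partial>lborel) < (\<integral>\<^sup>+t. v t \<partial>lborel)"
proof (rule nn_integral_less)
  show "\<not> (AE t in lborel. v t \<le> u t)"
  proof
    assume "AE t in lborel. v t \<le> u t"
    then have "AE t in lborel. t \<notin> {a<..<b}"
      by eventually_elim (use less in \<open>auto simp: not_le[symmetric]\<close>)
    then have "emeasure lborel {a<..<b} = 0"
      by (rule AE_iff_measurable[THEN iffD1, rotated 2]) auto
    with \<open>a < b\<close> show False
      by simp
  qed
qed (use assms in auto)

lemma nn_integral_pos_part_less_of_cdf_less:
  assumes M: "prob_space M" and N: "prob_space N"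
    and f_meas[measurable]: "f \<in> borel_measurable M" and g_meas[measurable]: "g \<in> borel_measurable N"
    and le: "\<And>t. cdf_real M f t \<le> cdf_real N g t"
    and less: "cdf_real M f 0 < cdf_real N g 0"
    and finite: "(\<integral>\<^sup>+x. ennreal (g x) \<partial>N) \<noteq> \<infinity>"
  shows "(\<integral>\<^sup>+x. ennreal (g x) \<partial>N) < (\<integral>\<^sup>+x. ennreal (f x) \<partial>M)"
proof -
  define F where "F = cdf_real M f"
  define G where "G = cdf_real N g"
  have "continuous (at_right 0) F"
    unfolding F_def using prob_space.cdf_real_right_continuous[OF M] by simp
  then have "eventually (\<lambda>t. F t < G 0) (at_right 0)"
    using less unfolding F_def G_def continuous_within by (intro order_tendstoD(2)) auto
  then obtain b where "b > 0" and below: "\<And>t. 0 < t \<Longrightarrow> t < b \<Longrightarrow> F t < G 0"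
    unfolding eventually_at_right_field by auto
  have mono: "mono F" "mono G"
    unfolding F_def G_def using prob_space.mono_cdf_real[OF M f_meas] prob_space.mono_cdf_real[OF N g_meas] .
  have G_le_1: "G t \<le> 1" for t
    unfolding G_def cdf_real_def using prob_space.prob_le_1[OF N] .
  have gap: "F t < G t" if "0 < t" "t < b" for t
    using below[OF that] monoD[OF \<open>mono G\<close>, of 0 t] \<open>0 < t\<close> by simp
  have [measurable]: "F \<in> borel_measurable borel" "G \<in> borel_measurable borel"
    using mono by (simp_all add: borel_measurable_mono)
  have G_eq: "(\<integral>\<^sup>+x. ennreal (g x) \<partial>N) = (\<integral>\<^sup>+t\<in>{0..}. ennreal (1 - G t) \<partial>lborel)"
    unfolding G_def by (rule prob_space.nn_integral_pos_part_eq_cdf[OF N]) measurable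
  have F_eq: "(\<integral>\<^sup>+x. ennreal (f x) \<partial>M) = (\<integral>\<^sup>+t\<in>{0..}. ennreal (1 - F t) \<partial>lborel)"
    unfolding F_def by (rule prob_space.nn_integral_pos_part_eq_cdf[OF M]) measurable
  have "(\<integral>\<^sup>+t\<in>{0..}. ennreal (1 - G t) \<partial>lborel) < (\<integral>\<^sup>+t\<in>{0..}. ennreal (1 - F t) \<partial>lborel)"
  proof (rule nn_integral_lborel_less_of_less_on_interval[OF _ _ _ _ \<open>b > 0\<close>])
    show "(\<integral>\<^sup>+t\<in>{0..}. ennreal (1 - G t) \<partial>lborel) \<noteq> \<infinity>"
      using finite G_eq by simp
    show "ennreal (1 - G t) * indicator {0..} t \<le> ennreal (1 - F t) * indicator {0..} t" for t
      using le unfolding F_def G_def by (intro mult_right_mono ennreal_leI) auto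
    show "ennreal (1 - G t) * indicator {0..} t < ennreal (1 - F t) * indicator {0..} t"
      if "0 < t" "t < b" for t
      using gap[OF that] G_le_1[of t] \<open>0 < t\<close> by (simp add: ennreal_lessI)
  qed measurable
  then show ?thesis
    unfolding F_eq G_eq .
qed

lemma integral_mono_of_parts:
  fixes f :: "'a \<Rightarrow> real" and g :: "'b \<Rightarrow> real"
  assumes "integrable M f" "integrable N g"
    and "(\<integral>\<^sup>+x. ennreal (g x) \<partial>N) \<le> (\<integral>\<^sup>+x. ennreal (f x) \<partial>M)"
    and "(\<integral>\<^sup>+x. ennreal (- f x) \<partial>M) \<le> (\<integral>\<^sup>+x. ennreal (- g x) \<partial>N)"
  shows "integral\<^sup>L N g \<le> integral\<^sup>L M f"
  using assms enn2real_mono[of "\<integral>\<^sup>+x. ennreal (g x) \<partial>N" "\<integral>\<^sup>+x. ennreal (f x) \<partial>M"]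
    enn2real_mono[of "\<integral>\<^sup>+x. ennreal (- f x) \<partial>M" "\<integral>\<^sup>+x. ennreal (- g x) \<partial>N"]
  by (simp add: real_lebesgue_integral_def real_integrable_def less_top)

lemma integral_strict_mono_of_parts:
  fixes f :: "'a \<Rightarrow> real" and g :: "'b \<Rightarrow> real"
  assumes "integrable M f" "integrable N g"
    and "(\<integral>\<^sup>+x. ennreal (g x) \<partial>N) < (\<integral>\<^sup>+x. ennreal (f x) \<partial>M)"
    and "(\<integral>\<^sup>+x. ennreal (- f x) \<partial>M) \<le> (\<integral>\<^sup>+x. ennreal (- g x) \<partial>N)"
  shows "integral\<^sup>L N g < integral\<^sup>L M f"
proof -
  have "enn2real (\<integral>\<^sup>+x. ennreal (g x) \<partial>N) < enn2real (\<integral>\<^sup>+x. ennreal (f x) \<partial>M)"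
    using assms(1,2,3) by (subst enn2real_less_iff) (auto simp: real_integrable_def less_top)
  moreover have "enn2real (\<integral>\<^sup>+x. ennreal (- f x) \<partial>M) \<le> enn2real (\<integral>\<^sup>+x. ennreal (- g x) \<partial>N)"
    using assms(2,4) by (intro enn2real_mono) (auto simp: real_integrable_def less_top)
  ultimately show ?thesis
    using assms(1,2) by (simp add: real_lebesgue_integral_def)
qed

lemma integral_le_of_cdf_le:
  fixes f :: "'a \<Rightarrow> real" and g :: "'b \<Rightarrow> real"
  assumes "prob_space M" "prob_space N" "integrable M f" "integrable N g"
    and "\<And>t. cdf_real M f t \<le> cdf_real N g t"
  shows "integral\<^sup>L N g \<le> integral\<^sup>L M f"
  using assms
  by (intro integral_mono_of_parts nn_integral_pos_part_le_of_cdf_le nn_integral_neg_part_le_of_cdf_le)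
     simp_all

lemma integral_less_of_cdf_less:
  fixes f :: "'a \<Rightarrow> real" and g :: "'b \<Rightarrow> real"
  assumes M: "prob_space M" and N: "prob_space N" and f: "integrable M f" and g: "integrable N g"
    and le: "\<And>t. cdf_real M f t \<le> cdf_real N g t"
    and less: "cdf_real M f t\<^sub>0 < cdf_real N g t\<^sub>0"
  shows "integral\<^sup>L N g < integral\<^sup>L M f"
proof -
  interpret M: prob_space M by (rule M)
  interpret N: prob_space N by (rule N)
  \<comment> \<open>Shift by \<open>t\<^sub>0\<close> so that the strict gap sits at 0, where the positive part detects it.\<close>
  define f' where "f' = (\<lambda>x. f x - t\<^sub>0)"
  define g' where "g' = (\<lambda>x. g x - t\<^sub>0)"
  have shift: "cdf_real K (\<lambda>x. h x - t\<^sub>0) t = cdf_real K h (t + t\<^sub>0)" for K and h :: "'c \<Rightarrow> real" and t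
    unfolding cdf_real_def by (rule arg_cong[where f = "measure K"]) auto
  have f': "integrable M f'" and g': "integrable N g'"
    using f g unfolding f'_def g'_def by auto
  have le': "cdf_real M f' t \<le> cdf_real N g' t" for t
    using le unfolding f'_def g'_def shift .
  have less': "cdf_real M f' 0 < cdf_real N g' 0"
    using less unfolding f'_def g'_def shift by simp
  have "integral\<^sup>L N g' < integral\<^sup>L M f'"
  proof (rule integral_strict_mono_of_parts[OF f' g'])
    show "(\<integral>\<^sup>+x. ennreal (g' x) \<partial>N) < (\<integral>\<^sup>+x. ennreal (f' x) \<partial>M)"
      using f' g' by (intro nn_integral_pos_part_less_of_cdf_less[OF M N _ _ le' less'])
        (auto simp: real_integrable_def)
    show "(\<integral>\<^sup>+x. ennreal (- f' x) \<partial>M) \<le> (\<integral>\<^sup>+x. ennreal (- g' x) \<partial>N)"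
      using M N f' g' le' by (intro nn_integral_neg_part_le_of_cdf_le) auto
  qed
  then show ?thesis
    using f g by (simp add: f'_def g'_def M.prob_space N.prob_space)
qed

lemma (in prob_space) cdf_vec_tendsto_cdf_real_component:
  fixes X :: "'a \<Rightarrow> real^'d"
  assumes X: "X \<in> borel_measurable M"
  shows "(\<lambda>n. cdf_vec M X (\<chi> k. if k = j then t else real n)) \<longlonglongrightarrow> cdf_real M (\<lambda>w. X w $ j) t"
proof -
  define c :: "nat \<Rightarrow> real^'d" where "c n = (\<chi> k. if k = j then t else real n)" for n
  define A where "A n = {w \<in> space M. X w \<le> c n}" for n
  have "A n = X -` {..c n} \<inter> space M" for n
    unfolding A_def by auto
  then have events: "range A \<subseteq> events"
    using measurable_sets[OF X borel_closed[OF closed_eucl_atMost]] by auto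
  have "c n \<le> c m" if "n \<le> m" for n m
    using that unfolding c_def less_eq_vec_def by simp
  then have "incseq A"
    unfolding incseq_def A_def by (auto intro: order_trans)
  have "X w $ i \<le> real (nat \<lceil>norm (X w)\<rceil>)" for w i
    using abs_le_D1[OF component_le_norm_cart] real_nat_ceiling_ge by (rule order_trans)
  then have "X w \<le> c (nat \<lceil>norm (X w)\<rceil>)" if "X w $ j \<le> t" for w
    using that unfolding c_def less_eq_vec_def by auto
  moreover have "X w $ j \<le> t" if "X w \<le> c n" for w n
    using that[unfolded less_eq_vec_def, rule_format, of j] by (simp add: c_def)
  ultimately have "(\<Union>n. A n) = {w \<in> space M. X w $ j \<le> t}"
    unfolding A_def by blast
  then have "(\<lambda>n. measure M (A n)) \<longlonglongrightarrow> cdf_real M (\<lambda>w. X w $ j) t"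
    using finite_Lim_measure_incseq[OF events \<open>incseq A\<close>] unfolding cdf_real_def by simp
  then show ?thesis
    unfolding cdf_vec_def pareto_le_iff_less_eq A_def c_def .
qed

lemma cdf_real_component_le_of_fsd_ge_vec:
  fixes X Y :: "'a \<Rightarrow> real^'d"
  assumes "prob_space M" "prob_space N" "X \<in> borel_measurable M" "Y \<in> borel_measurable N"
    and "fsd_ge_vec M X N Y"
  shows "cdf_real M (\<lambda>w. X w $ j) t \<le> cdf_real N (\<lambda>w. Y w $ j) t"
proof (rule LIMSEQ_le[OF prob_space.cdf_vec_tendsto_cdf_real_component[OF assms(1,3)]
      prob_space.cdf_vec_tendsto_cdf_real_component[OF assms(2,4)]])
  show "\<exists>n\<^sub>0. \<forall>n\<ge>n\<^sub>0. cdf_vec M X (\<chi> k. if k = j then t else real n) \<le> cdf_vec N Y (\<chi> k. if k = j then t else real n)"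
    using assms(5) unfolding fsd_ge_vec_def by blast
qed

lemma integrable_vec_nth:
  fixes f :: "'a \<Rightarrow> real^'d"
  assumes "integrable M f"
  shows "integrable M (\<lambda>x. f x $ j)"
  using integrable_bounded_linear[OF bounded_linear_vec_nth assms] by simp

lemma integral_vec_nth:
  fixes f :: "'a \<Rightarrow> real^'d"
  assumes "integrable M f"
  shows "integral\<^sup>L M f $ j = integral\<^sup>L M (\<lambda>x. f x $ j)"
  using integral_bounded_linear[OF bounded_linear_vec_nth assms] by simp

lemma pareto_dom_integral_of_dist_dom:
  fixes X Y :: "'a \<Rightarrow> real^'d"
  assumes M: "prob_space M" and N: "prob_space N" and X: "integrable M X" and Y: "integrable N Y"
    and "dist_dom M X N Y"
  shows "pareto_dom (integral\<^sup>L M X) (integral\<^sup>L N Y)"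
proof -
  obtain i where fsd: "fsd_ge_vec M X N Y"
    and strict: "fsd_strict_real M (\<lambda>w. X w $ i) N (\<lambda>w. Y w $ i)"
    using assms(5) unfolding dist_dom_def by blast
  have cdf_le: "cdf_real M (\<lambda>w. X w $ j) t \<le> cdf_real N (\<lambda>w. Y w $ j) t" for j t
    using cdf_real_component_le_of_fsd_ge_vec[OF M N _ _ fsd] X Y by simp
  have "integral\<^sup>L N Y $ j \<le> integral\<^sup>L M X $ j" for j
    unfolding integral_vec_nth[OF X] integral_vec_nth[OF Y]
    by (rule integral_le_of_cdf_le[OF M N integrable_vec_nth[OF X] integrable_vec_nth[OF Y] cdf_le])
  moreover obtain t\<^sub>0 where "cdf_real M (\<lambda>w. X w $ i) t\<^sub>0 < cdf_real N (\<lambda>w. Y w $ i) t\<^sub>0"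
    using strict unfolding fsd_strict_real_def by blast
  then have "integral\<^sup>L N Y $ i < integral\<^sup>L M X $ i"
    unfolding integral_vec_nth[OF X] integral_vec_nth[OF Y]
    by (rule integral_less_of_cdf_less[OF M N integrable_vec_nth[OF X] integrable_vec_nth[OF Y] cdf_le])
  ultimately show ?thesis
    unfolding pareto_dom_def by blast
qed

theorem corollary4p1p1:
  fixes Pols :: "'p set" and M :: "'p \<Rightarrow> 'w measure" and Z :: "'p \<Rightarrow> 'w \<Rightarrow> real^'d"
  assumes "\<And>\<pi>. \<pi> \<in> Pols \<Longrightarrow> prob_space (M \<pi>)"
      and "\<And>\<pi>. \<pi> \<in> Pols \<Longrightarrow> Z \<pi> \<in> borel_measurable (M \<pi>)"
      and "\<And>\<pi>. \<pi> \<in> Pols \<Longrightarrow> integrable (M \<pi>) (Z \<pi>)"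
  shows "pareto_front Pols M Z \<subseteq> dus Pols M Z"
proof
  fix \<pi> assume "\<pi> \<in> pareto_front Pols M Z"
  then have \<pi>: "\<pi> \<in> Pols"
    and undominated: "\<And>\<pi>'. \<pi>' \<in> Pols \<Longrightarrow> \<not> pareto_dom (value_vec M Z \<pi>') (value_vec M Z \<pi>)"
    unfolding pareto_front_def by auto
  have "\<not> dist_dom (M \<pi>') (Z \<pi>') (M \<pi>) (Z \<pi>)" if "\<pi>' \<in> Pols" for \<pi>'
    using undominated[OF that] unfolding value_vec_def
    by (metis pareto_dom_integral_of_dist_dom assms(1,3) that \<pi>)
  with \<pi> show "\<pi> \<in> dus Pols M Z"
    unfolding dus_def by blast
qed

end
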